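(* Let $S,T\subseteq\mathbb{Z}_{>0}$ be finite with $T\preceq S$, and let $x$ be such that $|T_{<x}|=|S_{\le x}|$. Then $(T\triangleleft S)(j)=T(j)$ for every $j\le|T_{<x}|$.
   Context: For a finite set $S\subseteq\mathbb{Z}_{>0}$, $S(i)$ denotes its $i$th smallest element, $S_{<x}=\{s\in S:s<x\}$, $S_{\le x}=\{s\in S:s\le x\}$. $T\preceq S$ means $|T|\ge|S|$ and $T(i)<S(i)$ for all $i\in[|S|]$. For finite $S,T$, $T\triangleleft S$ is computed by going through $S$ from largest to smallest; each $s$ picks the largest element of $T$ less than $s$ not yet picked (if one exists); $T\triangleleft S$ is the set of picked elements. *)

theory Defs
  imports Main
begin

text \<open>S(i): the i-th smallest element of a finite set S (1-indexed).\<close>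
definition nth_el :: "nat set \<Rightarrow> nat \<Rightarrow> nat" where
  "nth_el S i = sorted_list_of_set S ! (i - 1)"

definition prec :: "nat set \<Rightarrow> nat set \<Rightarrow> bool" where
  "prec T S \<longleftrightarrow> card T \<ge> card S \<and> (\<forall>i\<in>{1..card S}. nth_el T i < nth_el S i)"

text \<open>The second argument is the set of not-yet-picked elements of T.\<close>
fun pick :: "nat list \<Rightarrow> nat set \<Rightarrow> nat set" where
  "pick [] R = {}"
| "pick (s # ss) R =
     (if {t \<in> R. t < s} = {} then pick ss R
      else insert (Max {t \<in> R. t < s}) (pick ss (R - {Max {t \<in> R. t < s}})))"

definition tri :: "nat set \<Rightarrow> nat set \<Rightarrow> nat set" where
  "tri T S = pick (rev (sorted_list_of_set S)) T"

end

theory Submission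
  imports Defs
begin

text \<open>Call a list L feasible for a set R if every s in L has at least
  as many elements of R below it as there are elements of L that are \<open>\<le> s\<close> (Hall's condition for
  matching L into R downwards). \<open>T \<preceq> S\<close> makes S, listed from the largest element down, feasible
  for T, and a greedy step keeps the rest of the list feasible for the unpicked elements, so every
  element of S picks something. The elements of S above x go first; the remaining
  \<open>|S\<^sub>\<le>\<^sub>x| = |T\<^sub><\<^sub>x|\<close> elements then pick distinct elements of T below x, i.e. all of
  \<open>T\<^sub><\<^sub>x\<close>. So \<open>T \<triangleleft> S\<close> and T agree below x, and hence in their first \<open>|T\<^sub><\<^sub>x|\<close> elements.\<close>

lemma card_less_nth_sorted_list_of_set:
  fixes A :: "'a::linorder set"
  assumes "finite A" and "i < card A"
  shows "card {a \<in> A. a < sorted_list_of_set A ! i} = i"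
proof -
  let ?xs = "sorted_list_of_set A"
  have strict: "sorted_wrt (<) ?xs" and len: "length ?xs = card A"
    using assms(1) by simp_all
  have less_iff: "?xs ! k < ?xs ! i \<longleftrightarrow> k < i" if "k < length ?xs" for k
    using that assms(2) len sorted_wrt_nth_less[OF strict]
      sorted_nth_mono[OF sorted_sorted_list_of_set] by (metis leD leI)
  have "{a \<in> A. a < ?xs ! i} = {a \<in> set ?xs. a < ?xs ! i}"
    using assms(1) by simp
  also have "\<dots> = nth ?xs ` {..<i}"
    using less_iff assms(2) len by (auto simp: in_set_conv_nth intro: order.strict_trans)
  finally show ?thesis
    using assms len by (simp add: card_image inj_on_nth)
qed

lemma nth_el_mem:
  assumes "finite A" and "1 \<le> j" and "j \<le> card A"
  shows "nth_el A j \<in> A"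
proof -
  have "j - 1 < length (sorted_list_of_set A)"
    using assms by simp
  from nth_mem[OF this] show ?thesis
    using assms(1) unfolding nth_el_def by simp
qed

lemma card_less_nth_el:
  assumes "finite A" and "1 \<le> j" and "j \<le> card A"
  shows "card {a \<in> A. a < nth_el A j} = j - 1"
  using assms by (simp add: nth_el_def card_less_nth_sorted_list_of_set)

lemma nth_el_Suc_card_less:
  assumes "finite A" and "a \<in> A"
  shows "nth_el A (Suc (card {b \<in> A. b < a})) = a"
proof -
  obtain k where k: "k < card A" "a = sorted_list_of_set A ! k"
    using assms by (metis in_set_conv_nth length_sorted_list_of_set set_sorted_list_of_set)
  then show ?thesis
    using assms(1) by (simp add: nth_el_def card_less_nth_sorted_list_of_set)
qed

lemma nth_el_initial_segment:
  fixes A :: "nat set"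
  assumes "finite A" and "1 \<le> j" and "j \<le> card {a \<in> A. a < x}"
  shows "nth_el {a \<in> A. a < x} j = nth_el A j"
proof -
  let ?C = "{a \<in> A. a < x}"
  define c where "c = nth_el ?C j"
  have "finite ?C"
    using assms(1) by simp
  then have "c \<in> ?C" and "card {b \<in> ?C. b < c} = j - 1"
    using assms(2,3) nth_el_mem card_less_nth_el unfolding c_def by blast+
  moreover from \<open>c \<in> ?C\<close> have "{b \<in> ?C. b < c} = {b \<in> A. b < c}"
    by auto
  ultimately have "card {b \<in> A. b < c} = j - 1"
    by simp
  then have "nth_el A j = c"
    using nth_el_Suc_card_less[OF assms(1), of c] \<open>c \<in> ?C\<close> assms(2) by simp
  then show ?thesis
    unfolding c_def ..
qed

lemma sorted_list_of_set_split:
  fixes A :: "'a::linorder set"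
  assumes "finite A"
  shows "sorted_list_of_set A = sorted_list_of_set {a \<in> A. a \<le> x} @ sorted_list_of_set {a \<in> A. x < a}"
proof (rule strict_sorted_equal)
  show "sorted_wrt (<) (sorted_list_of_set {a \<in> A. a \<le> x} @ sorted_list_of_set {a \<in> A. x < a})"
    using assms by (auto simp: sorted_wrt_append)
  show "set (sorted_list_of_set A) = set (sorted_list_of_set {a \<in> A. a \<le> x} @ sorted_list_of_set {a \<in> A. x < a})"
    using assms by auto
qed simp

lemma card_le_card_less_if_prec:
  assumes "finite S" and "finite T" and "prec T S" and "s \<in> S"
  shows "card {s' \<in> S. s' \<le> s} \<le> card {t \<in> T. t < s}"
proof -
  define j where "j = Suc (card {s' \<in> S. s' < s})"
  have "{s' \<in> S. s' \<le> s} = insert s {s' \<in> S. s' < s}"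
    using assms(4) by auto
  then have card_S: "card {s' \<in> S. s' \<le> s} = j"
    using assms(1) unfolding j_def by simp
  have "j \<le> card S"
    using assms(1) card_S card_mono[of S "{s' \<in> S. s' \<le> s}"] by auto
  then have "nth_el T j < nth_el S j" and "j \<le> card T"
    using assms(3) unfolding prec_def j_def by auto
  moreover have "nth_el S j = s"
    using nth_el_Suc_card_less[OF assms(1,4)] unfolding j_def .
  ultimately have below_s: "{t \<in> T. t \<le> nth_el T j} \<subseteq> {t \<in> T. t < s}"
    by auto
  have "{t \<in> T. t \<le> nth_el T j} = insert (nth_el T j) {t \<in> T. t < nth_el T j}"
    using nth_el_mem[OF assms(2)] \<open>j \<le> card T\<close> j_def by auto
  then have "j = card {t \<in> T. t \<le> nth_el T j}"
    using card_less_nth_el[OF assms(2)] \<open>j \<le> card T\<close> j_def by simp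
  also have "\<dots> \<le> card {t \<in> T. t < s}"
    using below_s assms(2) by (intro card_mono) simp_all
  finally show ?thesis
    using card_S by simp
qed

definition pick_feasible :: "nat list \<Rightarrow> nat set \<Rightarrow> bool" where
  "pick_feasible L R \<longleftrightarrow> (\<forall>s \<in> set L. card {s' \<in> set L. s' \<le> s} \<le> card {r \<in> R. r < s})"

lemma pick_Cons_Max:
  assumes "{t \<in> R. t < s} \<noteq> {}"
  shows "pick (s # L) R = insert (Max {t \<in> R. t < s}) (pick L (R - {Max {t \<in> R. t < s}}))"
  using assms by (simp only: pick.simps if_False)

lemma pick_subset: "pick L R \<subseteq> R"
proof (induction L arbitrary: R)
  case (Cons s L)
  have "{t \<in> R. t < s} \<noteq> {} \<Longrightarrow> Max {t \<in> R. t < s} \<in> R"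
    using Max_in[of "{t \<in> R. t < s}"] by auto
  then show ?case
    using Cons.IH[of R] Cons.IH[of "R - {Max {t \<in> R. t < s}}"] by auto
qed simp

lemma pick_less:
  assumes "\<forall>s \<in> set L. s \<le> x"
  shows "pick L R \<subseteq> {..<x}"
  using assms
proof (induction L arbitrary: R)
  case (Cons s L)
  have "{t \<in> R. t < s} \<noteq> {} \<Longrightarrow> Max {t \<in> R. t < s} < s"
    using Max_in[of "{t \<in> R. t < s}"] by auto
  then show ?case
    using Cons by auto
qed simp

lemma pick_append: "pick (L1 @ L2) R = pick L1 R \<union> pick L2 (R - pick L1 R)"
proof (induction L1 arbitrary: R)
  case (Cons s L1)
  let ?m = "Max {t \<in> R. t < s}"
  have "R - {?m} - pick L1 (R - {?m}) = R - insert ?m (pick L1 (R - {?m}))"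
    by auto
  then show ?case
    using Cons.IH by auto
qed simp

lemma pick_feasible_Cons_nonempty:
  assumes "pick_feasible (s # L) R"
  shows "{t \<in> R. t < s} \<noteq> {}"
proof -
  have "0 < card {s' \<in> set (s # L). s' \<le> s}"
    by (auto simp: card_gt_0_iff)
  also have "\<dots> \<le> card {t \<in> R. t < s}"
    using assms unfolding pick_feasible_def by simp
  finally show ?thesis
    by (metis card.empty less_irrefl)
qed

lemma pick_feasible_Cons:
  assumes "finite R" and "sorted_wrt (>) (s # L)" and "pick_feasible (s # L) R"
  shows "pick_feasible L (R - {Max {t \<in> R. t < s}})"
  unfolding pick_feasible_def
proof
  let ?m = "Max {t \<in> R. t < s}"
  fix s' assume "s' \<in> set L"
  then have "s' < s" and "s \<notin> set L"
    using assms(2) by auto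
  have m: "?m \<in> R" "?m < s" "\<And>t. t \<in> R \<Longrightarrow> t < s \<Longrightarrow> t \<le> ?m"
    using Max_in[of "{t \<in> R. t < s}"] pick_feasible_Cons_nonempty[OF assms(3)] by auto
  have "card {s'' \<in> set (s # L). s'' \<le> s'} \<le> card {r \<in> R. r < s'}"
    using assms(3) \<open>s' \<in> set L\<close> unfolding pick_feasible_def by simp
  also have "{s'' \<in> set (s # L). s'' \<le> s'} = {s'' \<in> set L. s'' \<le> s'}"
    using \<open>s' < s\<close> by auto
  finally have IH: "card {s'' \<in> set L. s'' \<le> s'} \<le> card {r \<in> R. r < s'}" .
  show "card {s'' \<in> set L. s'' \<le> s'} \<le> card {r \<in> R - {?m}. r < s'}"
  proof (cases "?m < s'")
    case False
    then have "{r \<in> R - {?m}. r < s'} = {r \<in> R. r < s'}"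
      by auto
    with IH show ?thesis
      by simp
  next
    case True
    have "{r \<in> R - {?m}. r < s'} = {t \<in> R. t < s} - {?m}"
      using True m(3) \<open>s' < s\<close> by fastforce
    have "Suc (card {s'' \<in> set L. s'' \<le> s'}) = card (insert s {s'' \<in> set L. s'' \<le> s'})"
      using \<open>s \<notin> set L\<close> by simp
    also have "\<dots> \<le> card {s'' \<in> set (s # L). s'' \<le> s}"
      using \<open>s' < s\<close> by (intro card_mono) auto
    also have "\<dots> \<le> card {t \<in> R. t < s}"
      using assms(3) unfolding pick_feasible_def by simp
    also have "\<dots> = Suc (card {r \<in> R - {?m}. r < s'})"
      unfolding \<open>{r \<in> R - {?m}. r < s'} = {t \<in> R. t < s} - {?m}\<close>
      using m(1,2) assms(1) by (intro card_Suc_Diff1[symmetric]) simp_all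
    finally show ?thesis
      by simp
  qed
qed

lemma card_pick:
  assumes "finite R" and "sorted_wrt (>) L" and "pick_feasible L R"
  shows "card (pick L R) = length L"
  using assms
proof (induction L arbitrary: R)
  case (Cons s L)
  let ?m = "Max {t \<in> R. t < s}"
  have "pick (s # L) R = insert ?m (pick L (R - {?m}))"
    using pick_Cons_Max pick_feasible_Cons_nonempty[OF Cons.prems(3)] by simp
  moreover have "?m \<notin> pick L (R - {?m})"
    using pick_subset by blast
  moreover have "finite (pick L (R - {?m}))"
    using pick_subset Cons.prems(1) by (meson finite_Diff finite_subset)
  moreover have "card (pick L (R - {?m})) = length L"
    using Cons.IH[OF _ _ pick_feasible_Cons[OF Cons.prems]] Cons.prems(1,2) by simp
  ultimately show ?case
    by simp
qed simp

lemma pick_feasible_append: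
  assumes "finite R" and "sorted_wrt (>) (L1 @ L2)" and "pick_feasible (L1 @ L2) R"
  shows "pick_feasible L2 (R - pick L1 R)"
  using assms
proof (induction L1 arbitrary: R)
  case (Cons s L1)
  let ?m = "Max {t \<in> R. t < s}"
  have "pick_feasible L2 (R - {?m} - pick L1 (R - {?m}))"
    using Cons.IH[OF _ _ pick_feasible_Cons[OF Cons.prems(1) _ Cons.prems(3)[unfolded append_Cons]]]
      Cons.prems(1,2) by simp
  moreover have "R - {?m} - pick L1 (R - {?m}) = R - pick (s # L1) R"
    using pick_Cons_Max pick_feasible_Cons_nonempty[of s "L1 @ L2" R] Cons.prems by auto
  ultimately show ?case
    by simp
qed simp

lemma tri_subset: "tri T S \<subseteq> T"
  unfolding tri_def by (rule pick_subset)

lemma tri_initial_segment: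
  assumes "finite S" and "finite T" and "prec T S"
    and "card {t \<in> T. t < x} = card {s \<in> S. s \<le> x}"
  shows "{a \<in> tri T S. a < x} = {t \<in> T. t < x}"
proof -
  define L1 where "L1 = rev (sorted_list_of_set {s \<in> S. x < s})"
  define L2 where "L2 = rev (sorted_list_of_set {s \<in> S. s \<le> x})"
  define R where "R = T - pick L1 T"
  have split: "rev (sorted_list_of_set S) = L1 @ L2"
    unfolding L1_def L2_def using sorted_list_of_set_split[OF assms(1), of x] by simp
  have decreasing: "sorted_wrt (>) (L1 @ L2)"
    unfolding split[symmetric] by (simp add: sorted_wrt_rev)
  have "pick_feasible (L1 @ L2) T"
    unfolding split[symmetric] pick_feasible_def
    using card_le_card_less_if_prec[OF assms(1-3)] assms(1) by simp
  then have "pick_feasible L2 R"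
    unfolding R_def using pick_feasible_append[OF assms(2) decreasing] by simp
  then have card_eq: "card (pick L2 R) = card {t \<in> T. t < x}"
    using card_pick[of R L2] decreasing assms(1,2,4)
    unfolding L2_def R_def by (simp add: sorted_wrt_append)
  have "pick L2 R \<subseteq> {t \<in> T. t < x}"
    using pick_subset[of L2 R] pick_less[of L2 x R] unfolding R_def L2_def by auto
  then have "pick L2 R = {t \<in> T. t < x}"
    using card_subset_eq[OF _ _ card_eq] assms(2) by simp
  moreover have "tri T S = pick L1 T \<union> pick L2 R"
    unfolding tri_def split pick_append R_def ..
  ultimately show ?thesis
    using tri_subset[of T S] by auto
qed

theorem lemma4p9:
  fixes S T :: "nat set" and x :: nat
  assumes "finite S" and "finite T"
    and "0 \<notin> S" and "0 \<notin> T"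
    and "prec T S"
    and "card {t \<in> T. t < x} = card {s \<in> S. s \<le> x}"
  shows "\<forall>j. 1 \<le> j \<and> j \<le> card {t \<in> T. t < x} \<longrightarrow> nth_el (tri T S) j = nth_el T j"
proof (intro allI impI)
  fix j assume j: "1 \<le> j \<and> j \<le> card {t \<in> T. t < x}"
  have segment: "{a \<in> tri T S. a < x} = {t \<in> T. t < x}"
    using tri_initial_segment[OF assms(1,2,5,6)] .
  have "finite (tri T S)"
    using finite_subset[OF tri_subset assms(2)] .
  with j segment have "nth_el (tri T S) j = nth_el {t \<in> T. t < x} j"
    using nth_el_initial_segment[of "tri T S" j x] by simp
  also have "\<dots> = nth_el T j"
    using nth_el_initial_segment[OF assms(2), of j x] j by simp
  finally show "nth_el (tri T S) j = nth_el T j" .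
qed

end
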